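(* Let $k$ be a field of characteristic $p>0$ and $A$ a $k$-vector space of finite dimension $n\ge1$. For every $r\ge0$, $S_{\le r}A\neq\bigoplus_{0\le i\le r}S^iA$.
   Context: $SA=\bigoplus_{m\ge0}S^mA$ is the symmetric algebra of $A$ ($S^0A=k$, $S^mA$ the $m$-th symmetric power, with pure symmetric tensors $a_1\otimes_s\dots\otimes_s a_m$). The linear map $\partial\colon SA\to SA\otimes A$ is given by $\partial(\lambda)=0$ for $\lambda\in S^0A$ and $\partial(a_1\otimes_s\dots\otimes_s a_m)=\sum_{i=1}^m(a_1\otimes_s\dots\otimes_s a_{i-1}\otimes_s a_{i+1}\otimes_s\dots\otimes_s a_m)\otimes a_i$. Iterates: $\partial^0=1_{SA}$ and $\partial^{r+1}:=\partial;(\partial^r\otimes 1_A)\colon SA\to SA\otimes A^{\otimes(r+1)}$. Define $S_{\le r}A:=\ker(\partial^{r+1})\subseteq SA$. *)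

theory Defs
  imports Main
begin

text \<open>Coordinates: A = k^n with basis e_0..e_(n-1). A monomial x^mu (mu :: nat => nat,
 exponents) is the pure symmetric tensor with mu i copies of e_i. An element of SA is a
 finitely supported coefficient function on monomials in the variables 0..n-1.
 An element of SA (x) A^(x)q is a function from index lists js (length q, entries < n,
 standing for e_(js!0) (x) ... (x) e_(js!(q-1))) to SA.\<close>

type_synonym 'k sym = "(nat \<Rightarrow> nat) \<Rightarrow> 'k"

definition SA :: "nat \<Rightarrow> 'k::field sym set" where
  "SA n = {f. finite {m. f m \<noteq> 0} \<and> (\<forall>m. f m \<noteq> 0 \<longrightarrow> (\<forall>i\<ge>n. m i = 0))}"

definition mdeg :: "nat \<Rightarrow> (nat \<Rightarrow> nat) \<Rightarrow> nat" where
  "mdeg n m = (\<Sum>i<n. m i)"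

text \<open>The e_j-component of the boundary of the monomial x^mu: each of the mu j factors
 equal to e_j contributes x^(mu - e_j).\<close>
definition mon_bd :: "(nat \<Rightarrow> nat) \<Rightarrow> nat \<Rightarrow> 'k::field sym" where
  "mon_bd mu j = (\<lambda>m. if 0 < mu j \<and> m = mu(j := mu j - 1) then of_nat (mu j) else 0)"

definition bd :: "'k::field sym \<Rightarrow> nat \<Rightarrow> 'k sym" where
  "bd f j = (\<lambda>m. \<Sum>mu\<in>{mu. f mu \<noteq> 0}. f mu * mon_bd mu j m)"

text \<open>Iterates: bd^0 = id, bd^(q+1) = bd ; (bd^q (x) 1_A).\<close>
fun bd_iter :: "nat \<Rightarrow> nat \<Rightarrow> 'k::field sym \<Rightarrow> nat list \<Rightarrow> 'k sym" where
  "bd_iter n 0 f = (\<lambda>js. if js = [] then f else (\<lambda>_. 0))"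
| "bd_iter n (Suc q) f = (\<lambda>js. if js \<noteq> [] \<and> last js < n
      then bd_iter n q (bd f (last js)) (butlast js) else (\<lambda>_. 0))"

definition S_le :: "nat \<Rightarrow> nat \<Rightarrow> 'k::field sym set" where
  "S_le n r = {f \<in> SA n. bd_iter n (Suc r) f = (\<lambda>_ _. 0)}"

definition S_upto :: "nat \<Rightarrow> nat \<Rightarrow> 'k::field sym set" where
  "S_upto n r = {f \<in> SA n. \<forall>m. f m \<noteq> 0 \<longrightarrow> mdeg n m \<le> r}"

end

theory Submission
  imports Defs
begin

text \<open>In characteristic p the boundary of a monomial picks up its exponents as scalar
 factors, so a monomial all of whose exponents are multiples of p is killed by the boundary
 and lies in every S_le n r. The monomial x_0^(p(r+1)) is such a cycle, yet its degree
 p(r+1) exceeds r.\<close>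

definition monomial :: "(nat \<Rightarrow> nat) \<Rightarrow> 'k::field sym" where
  "monomial mu = (\<lambda>m. if m = mu then 1 else 0)"

lemma monomial_support: "{m. (monomial mu :: 'k::field sym) m \<noteq> 0} = {mu}"
  by (auto simp: monomial_def)

lemma monomial_in_SA:
  assumes "\<And>i. i \<ge> n \<Longrightarrow> mu i = 0"
  shows "(monomial mu :: 'k::field sym) \<in> SA n"
  using assms by (auto simp: SA_def monomial_support monomial_def)

lemma bd_monomial: "bd (monomial mu :: 'k::field sym) j = mon_bd mu j"
  unfolding bd_def monomial_support by (simp add: monomial_def)

lemma mon_bd_eq_0_if_CHAR_dvd:
  assumes "CHAR('k::field) dvd mu j"
  shows "(mon_bd mu j :: 'k sym) = (\<lambda>_. 0)"
  using assms by (auto simp: mon_bd_def fun_eq_iff of_nat_eq_0_iff_char_dvd)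

lemma bd_zero: "bd (\<lambda>_. 0 :: 'k::field) j = (\<lambda>_. 0)"
  by (simp add: bd_def)

lemma bd_iter_zero: "bd_iter n q (\<lambda>_. 0 :: 'k::field) = (\<lambda>_ _. 0)"
  by (induction q) (auto simp: bd_zero fun_eq_iff)

lemma bd_iter_Suc_eq_0_if_bd_eq_0:
  assumes "\<And>j. bd f j = (\<lambda>_. 0 :: 'k::field)"
  shows "bd_iter n (Suc q) f = (\<lambda>_ _. 0)"
  by (auto simp: fun_eq_iff assms bd_iter_zero)

lemma monomial_in_S_le_if_CHAR_dvd:
  assumes "\<And>i. i \<ge> n \<Longrightarrow> mu i = 0" and "\<And>j. CHAR('k::field) dvd mu j"
  shows "(monomial mu :: 'k sym) \<in> S_le n r"
proof -
  have "bd (monomial mu :: 'k sym) j = (\<lambda>_. 0)" for j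
    using assms(2) by (simp add: bd_monomial mon_bd_eq_0_if_CHAR_dvd)
  then show ?thesis
    unfolding S_le_def using monomial_in_SA[of n mu] assms(1) bd_iter_Suc_eq_0_if_bd_eq_0 by blast
qed

lemma monomial_in_S_upto_iff:
  assumes "\<And>i. i \<ge> n \<Longrightarrow> mu i = 0"
  shows "(monomial mu :: 'k::field sym) \<in> S_upto n r \<longleftrightarrow> mdeg n mu \<le> r"
  using assms monomial_in_SA by (auto simp: S_upto_def monomial_def)

lemma mdeg_single_variable:
  assumes "i < n"
  shows "mdeg n ((\<lambda>_. 0)(i := d)) = d"
  using assms by (simp add: mdeg_def sum.delta)

theorem proposition7p7:
  fixes n r :: nat
  assumes "CHAR('k::field) > 0" and "n \<ge> 1"
  shows "(S_le n r :: 'k sym set) \<noteq> S_upto n r"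
proof -
  define mu :: "nat \<Rightarrow> nat" where "mu = (\<lambda>_. 0)(0 := CHAR('k) * Suc r)"
  have vanish: "\<And>i. i \<ge> n \<Longrightarrow> mu i = 0"
    using assms(2) by (simp add: mu_def)
  have "CHAR('k) dvd mu j" for j
    by (simp add: mu_def)
  then have cycle: "(monomial mu :: 'k sym) \<in> S_le n r"
    using vanish by (simp add: monomial_in_S_le_if_CHAR_dvd)
  have "mdeg n mu = CHAR('k) * Suc r"
    using assms(2) by (simp add: mu_def mdeg_single_variable)
  also have "\<dots> > r"
    using assms(1) by (cases "CHAR('k)") auto
  finally have "(monomial mu :: 'k sym) \<notin> S_upto n r"
    by (simp add: monomial_in_S_upto_iff[OF vanish])
  with cycle show ?thesis
    by blast
qed

end
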